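(* Let $\Gamma$ be a nontrivial standard graph, let $f$ be a Morse eigenfunction of $\Gamma$ with eigenvalue $k$ (i.e. $-f''=k^2f$ on every edge, with Neumann vertex conditions), and let $\Omega$ be a Neumann domain of $f$, regarded as a metric graph with Neumann vertex conditions at all of its vertices. Then $f|_\Omega$ is an eigenfunction of the standard graph $\Omega$ corresponding to the eigenvalue $k$.
   Context: A metric graph is a finite connected graph $\Gamma=(\mathcal{V},\mathcal{E})$ (loops allowed) in which each edge $e$ is identified with an interval $[0,L_e]$, $L_e>0$. The Laplacian acts as $f|_e\mapsto -\frac{d^2}{dx_e^2}f|_e$ on functions in $\bigoplus_e H^2([0,L_e])$ satisfying Neumann vertex conditions at every vertex $v$: $f$ is continuous at $v$ and the sum of outgoing derivatives of $f$ at $v$ over incident edges is zero. Such a graph is standard; it is assumed to have no vertices of degree two, and it is nontrivial if it is not a single loop. The eigenvalues are written as $k^2$ with $k\ge0$, and $k$ is also called the eigenvalue. An eigenfunction $f$ is Morse if on each edge no interior point has both $f'$ and $f''$ vanishing. For a Morse eigenfunction, a Neumann point is a point of $\Gamma$ which is a local extremum (maximum or minimum) of $f$ and is not a vertex of degree one. A Neumann domain of $f$ is the closure of a connected component of $\Gamma$ minus the set of Neumann points, the closure being done by adding a vertex of degree one at each open endpoint of the component; its vertices are the vertices of $\Gamma$ it contains together with these added endpoints. *)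

theory Defs
  imports "HOL-Analysis.Analysis"
begin

text \<open>A metric graph is given by a vertex set V, an edge set E, maps src/tgt
 (edge e is identified with [0, L e], 0 at src e, L e at tgt e) and lengths L.
 A function on the graph is given edgewise: f e t for t in [0, L e].\<close>

definition graph_adj :: "'e set \<Rightarrow> ('e \<Rightarrow> 'v) \<Rightarrow> ('e \<Rightarrow> 'v) \<Rightarrow> ('v \<times> 'v) set" where
  "graph_adj E src tgt = {(src e, tgt e) | e. e \<in> E} \<union> {(tgt e, src e) | e. e \<in> E}"

definition metric_graph ::
  "'v set \<Rightarrow> 'e set \<Rightarrow> ('e \<Rightarrow> 'v) \<Rightarrow> ('e \<Rightarrow> 'v) \<Rightarrow> ('e \<Rightarrow> real) \<Rightarrow> bool" where
  "metric_graph V E src tgt L \<longleftrightarrow>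
     finite V \<and> finite E \<and> E \<noteq> {} \<and>
     (\<forall>e\<in>E. src e \<in> V \<and> tgt e \<in> V \<and> L e > 0) \<and>
     (\<forall>u\<in>V. \<forall>w\<in>V. (u, w) \<in> (graph_adj E src tgt)\<^sup>*)"

text \<open>Degree: number of edge-ends at v (a loop counts twice).\<close>
definition deg :: "'e set \<Rightarrow> ('e \<Rightarrow> 'v) \<Rightarrow> ('e \<Rightarrow> 'v) \<Rightarrow> 'v \<Rightarrow> nat" where
  "deg E src tgt v = card {e\<in>E. src e = v} + card {e\<in>E. tgt e = v}"

definition standard_graph ::
  "'v set \<Rightarrow> 'e set \<Rightarrow> ('e \<Rightarrow> 'v) \<Rightarrow> ('e \<Rightarrow> 'v) \<Rightarrow> ('e \<Rightarrow> real) \<Rightarrow> bool" where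
  "standard_graph V E src tgt L \<longleftrightarrow>
     metric_graph V E src tgt L \<and> (\<forall>v\<in>V. deg E src tgt v \<noteq> 2)"

definition nontrivial_graph ::
  "'v set \<Rightarrow> 'e set \<Rightarrow> ('e \<Rightarrow> 'v) \<Rightarrow> ('e \<Rightarrow> 'v) \<Rightarrow> bool" where
  "nontrivial_graph V E src tgt \<longleftrightarrow> \<not> (\<exists>e. E = {e} \<and> src e = tgt e \<and> V = {src e})"

text \<open>Eigenfunction of the Neumann (standard) Laplacian with eigenvalue k (i.e. k^2):
 on each edge f is twice differentiable on [0, L e] with -f'' = k^2 f; f is continuous
 at the vertices; at each vertex the sum of outgoing derivatives vanishes
 (outgoing derivative is f'(0) at src e and -f'(L e) at tgt e); f is not identically zero.\<close>
definition eigenfunction ::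
  "'v set \<Rightarrow> 'e set \<Rightarrow> ('e \<Rightarrow> 'v) \<Rightarrow> ('e \<Rightarrow> 'v) \<Rightarrow> ('e \<Rightarrow> real) \<Rightarrow> real \<Rightarrow>
   ('e \<Rightarrow> real \<Rightarrow> real) \<Rightarrow> bool" where
  "eigenfunction V E src tgt L k f \<longleftrightarrow>
     k \<ge> 0 \<and>
     (\<exists>D :: 'e \<Rightarrow> real \<Rightarrow> real.
        (\<forall>e\<in>E. \<forall>t\<in>{0..L e}.
           (f e has_real_derivative D e t) (at t within {0..L e}) \<and>
           (D e has_real_derivative (- (k\<^sup>2 * f e t))) (at t within {0..L e})) \<and>
        (\<forall>v\<in>V. (\<Sum>e\<in>{e\<in>E. src e = v}. D e 0) - (\<Sum>e\<in>{e\<in>E. tgt e = v}. D e (L e)) = 0)) \<and>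
     (\<exists>g :: 'v \<Rightarrow> real. \<forall>e\<in>E. f e 0 = g (src e) \<and> f e (L e) = g (tgt e)) \<and>
     (\<exists>e\<in>E. \<exists>t\<in>{0..L e}. f e t \<noteq> 0)"

definition morse :: "'e set \<Rightarrow> ('e \<Rightarrow> real) \<Rightarrow> ('e \<Rightarrow> real \<Rightarrow> real) \<Rightarrow> bool" where
  "morse E L f \<longleftrightarrow>
     (\<forall>e\<in>E. \<forall>t\<in>{0<..<L e}. \<not> (deriv (f e) t = 0 \<and> deriv (deriv (f e)) t = 0))"

definition edge_extremum :: "('e \<Rightarrow> real) \<Rightarrow> ('e \<Rightarrow> real \<Rightarrow> real) \<Rightarrow> 'e \<Rightarrow> real \<Rightarrow> bool" where
  "edge_extremum L f e t \<longleftrightarrow> 0 < t \<and> t < L e \<and>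
     (\<exists>\<delta>>0. (\<forall>s\<in>{0..L e}. \<bar>s - t\<bar> < \<delta> \<longrightarrow> f e s \<le> f e t) \<or>
            (\<forall>s\<in>{0..L e}. \<bar>s - t\<bar> < \<delta> \<longrightarrow> f e s \<ge> f e t))"

definition vertex_extremum ::
  "'e set \<Rightarrow> ('e \<Rightarrow> 'v) \<Rightarrow> ('e \<Rightarrow> 'v) \<Rightarrow> ('e \<Rightarrow> real) \<Rightarrow> ('e \<Rightarrow> real \<Rightarrow> real) \<Rightarrow> 'v \<Rightarrow> bool" where
  "vertex_extremum E src tgt L f v \<longleftrightarrow>
     (\<exists>\<delta>>0.
       (\<forall>e\<in>E. (src e = v \<longrightarrow> (\<forall>s\<in>{0..L e}. s < \<delta> \<longrightarrow> f e s \<le> f e 0)) \<and>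
               (tgt e = v \<longrightarrow> (\<forall>s\<in>{0..L e}. L e - s < \<delta> \<longrightarrow> f e s \<le> f e (L e)))) \<or>
       (\<forall>e\<in>E. (src e = v \<longrightarrow> (\<forall>s\<in>{0..L e}. s < \<delta> \<longrightarrow> f e s \<ge> f e 0)) \<and>
               (tgt e = v \<longrightarrow> (\<forall>s\<in>{0..L e}. L e - s < \<delta> \<longrightarrow> f e s \<ge> f e (L e)))))"

text \<open>Neumann points: local extrema which are not vertices of degree one.
 A vertex v is a Neumann point iff neumann_vertex holds; the interior point t of e
 is a Neumann point iff edge_extremum holds.\<close>
definition neumann_vertex ::
  "'e set \<Rightarrow> ('e \<Rightarrow> 'v) \<Rightarrow> ('e \<Rightarrow> 'v) \<Rightarrow> ('e \<Rightarrow> real) \<Rightarrow> ('e \<Rightarrow> real \<Rightarrow> real) \<Rightarrow> 'v \<Rightarrow> bool" where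
  "neumann_vertex E src tgt L f v \<longleftrightarrow>
     vertex_extremum E src tgt L f v \<and> deg E src tgt v \<noteq> 1"

text \<open>Cutting the graph at all Neumann points.  Vertices of the cut graph: original vertices that are not
 Neumann points (Old v), and for each piece end lying at a Neumann point a new
 vertex of degree one (Cut e t side), one per side of each incident edge-end.\<close>
datatype ('v, 'e) nvert = Old 'v | Cut 'e real bool

definition cutpts :: "('e \<Rightarrow> real) \<Rightarrow> ('e \<Rightarrow> real \<Rightarrow> real) \<Rightarrow> 'e \<Rightarrow> real set" where
  "cutpts L f e = {0, L e} \<union> {t. edge_extremum L f e t}"

definition pieces :: "'e set \<Rightarrow> ('e \<Rightarrow> real) \<Rightarrow> ('e \<Rightarrow> real \<Rightarrow> real) \<Rightarrow> ('e \<times> real \<times> real) set" where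
  "pieces E L f = {(e, a, b) | e a b. e \<in> E \<and> a \<in> cutpts L f e \<and> b \<in> cutpts L f e \<and> a < b \<and>
                    (\<forall>t\<in>cutpts L f e. \<not> (a < t \<and> t < b))}"

definition nsrc ::
  "'e set \<Rightarrow> ('e \<Rightarrow> 'v) \<Rightarrow> ('e \<Rightarrow> 'v) \<Rightarrow> ('e \<Rightarrow> real) \<Rightarrow> ('e \<Rightarrow> real \<Rightarrow> real) \<Rightarrow>
   'e \<times> real \<times> real \<Rightarrow> ('v, 'e) nvert" where
  "nsrc E src tgt L f p = (case p of (e, a, b) \<Rightarrow>
     if a = 0 \<and> \<not> neumann_vertex E src tgt L f (src e) then Old (src e) else Cut e a True)"

definition ntgt ::
  "'e set \<Rightarrow> ('e \<Rightarrow> 'v) \<Rightarrow> ('e \<Rightarrow> 'v) \<Rightarrow> ('e \<Rightarrow> real) \<Rightarrow> ('e \<Rightarrow> real \<Rightarrow> real) \<Rightarrow>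
   'e \<times> real \<times> real \<Rightarrow> ('v, 'e) nvert" where
  "ntgt E src tgt L f p = (case p of (e, a, b) \<Rightarrow>
     if b = L e \<and> \<not> neumann_vertex E src tgt L f (tgt e) then Old (tgt e) else Cut e b False)"

definition nlen :: "'e \<times> real \<times> real \<Rightarrow> real" where
  "nlen p = (case p of (e, a, b) \<Rightarrow> b - a)"

definition nrestr :: "('e \<Rightarrow> real \<Rightarrow> real) \<Rightarrow> 'e \<times> real \<times> real \<Rightarrow> real \<Rightarrow> real" where
  "nrestr f p s = (case p of (e, a, b) \<Rightarrow> f e (a + s))"

text \<open>Neumann domain (OV, OE): a connected component of the cut graph, i.e. the closure
 of a connected component of Gamma minus the Neumann points, with a degree-one vertex
 added at each open end.\<close>
definition neumann_domain ::
  "'v set \<Rightarrow> 'e set \<Rightarrow> ('e \<Rightarrow> 'v) \<Rightarrow> ('e \<Rightarrow> 'v) \<Rightarrow> ('e \<Rightarrow> real) \<Rightarrow> ('e \<Rightarrow> real \<Rightarrow> real) \<Rightarrow>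
   ('v, 'e) nvert set \<Rightarrow> ('e \<times> real \<times> real) set \<Rightarrow> bool" where
  "neumann_domain V E src tgt L f OV OE \<longleftrightarrow>
     (let PE = pieces E L f;
          s = nsrc E src tgt L f; t = ntgt E src tgt L f;
          adj = graph_adj PE s t
      in (\<exists>p0\<in>PE. OV = {w. (s p0, w) \<in> adj\<^sup>*}) \<and> OE = {p\<in>PE. s p \<in> OV})"

end

theory Submission
  imports Defs
begin

(* On each edge f'' = -k^2 f, so the energy f'^2 + k^2 f^2 is constant; hence f' has only finitely
   many zeros on an edge unless f' and k^2 f vanish identically there, which the Morse condition
   excludes.  So every edge is cut into finitely many pieces.  The derivative vanishes at every cut
   point: at an interior extremum directly, and at an extremal vertex because all terms of the
   Kirchhoff sum there have the same sign.  Hence the Neumann condition holds trivially at the new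
   degree-one vertices, while an uncut vertex keeps all its incident edge-ends, since a Neumann
   domain is a connected component of the cut graph. *)

lemma DERIV_local_max_left_end:
  fixes g :: "real \<Rightarrow> real"
  assumes der: "(g has_real_derivative l) (at a within {a..b})" and "a < b" and "0 < \<delta>"
    and max: "\<And>s. s \<in> {a..b} \<Longrightarrow> s - a < \<delta> \<Longrightarrow> g s \<le> g a"
  shows "l \<le> 0"
proof -
  have quot: "((\<lambda>y. (g y - g a) / (y - a)) \<longlongrightarrow> l) (at a within {a..b})"
    using der has_field_derivative_iff by blast
  have "at a within {a..b} \<noteq> bot"
    using \<open>a < b\<close> by (simp add: at_within_Icc_at_right)
  moreover have "\<forall>\<^sub>F y in at a within {a..b}. (g y - g a) / (y - a) \<le> 0"
    unfolding eventually_at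
  proof (intro exI[of _ \<delta>] conjI ballI impI)
    fix y assume "y \<in> {a..b}" "y \<noteq> a \<and> dist y a < \<delta>"
    with max[of y] show "(g y - g a) / (y - a) \<le> 0"
      by (simp add: dist_real_def divide_nonpos_pos)
  qed (fact \<open>0 < \<delta>\<close>)
  ultimately show ?thesis
    using tendsto_upperbound[OF quot] by blast
qed

lemma DERIV_local_max_right_end:
  fixes g :: "real \<Rightarrow> real"
  assumes der: "(g has_real_derivative l) (at b within {a..b})" and "a < b" and "0 < \<delta>"
    and max: "\<And>s. s \<in> {a..b} \<Longrightarrow> b - s < \<delta> \<Longrightarrow> g s \<le> g b"
  shows "0 \<le> l"
proof -
  have quot: "((\<lambda>y. (g y - g b) / (y - b)) \<longlongrightarrow> l) (at b within {a..b})"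
    using der has_field_derivative_iff by blast
  have "at b within {a..b} \<noteq> bot"
    using \<open>a < b\<close> by (simp add: at_within_Icc_at_left)
  moreover have "\<forall>\<^sub>F y in at b within {a..b}. 0 \<le> (g y - g b) / (y - b)"
    unfolding eventually_at
  proof (intro exI[of _ \<delta>] conjI ballI impI)
    fix y assume "y \<in> {a..b}" "y \<noteq> b \<and> dist y b < \<delta>"
    with max[of y] show "0 \<le> (g y - g b) / (y - b)"
      by (simp add: dist_real_def divide_nonpos_neg)
  qed (fact \<open>0 < \<delta>\<close>)
  ultimately show ?thesis
    using tendsto_lowerbound[OF quot] by blast
qed

lemma DERIV_local_extremum_interior:
  fixes g :: "real \<Rightarrow> real"
  assumes der: "(g has_real_derivative l) (at t within {a..b})" and "a < t" "t < b" "0 < \<delta>"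
    and ext: "(\<forall>s\<in>{a..b}. \<bar>s - t\<bar> < \<delta> \<longrightarrow> g s \<le> g t) \<or> (\<forall>s\<in>{a..b}. \<bar>s - t\<bar> < \<delta> \<longrightarrow> g t \<le> g s)"
  shows "l = 0"
proof -
  define \<epsilon> where "\<epsilon> = min \<delta> (min (t - a) (b - t))"
  have "0 < \<epsilon>" using assms by (simp add: \<epsilon>_def)
  have at: "at t within {a..b} = at t"
    using assms by (simp add: at_within_Icc_at)
  from ext show ?thesis
  proof
    assume "\<forall>s\<in>{a..b}. \<bar>s - t\<bar> < \<delta> \<longrightarrow> g s \<le> g t"
    then have "\<forall>s. \<bar>t - s\<bar> < \<epsilon> \<longrightarrow> g s \<le> g t"
      by (auto simp: \<epsilon>_def abs_less_iff)
    then show ?thesis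
      using DERIV_local_max der \<open>0 < \<epsilon>\<close> unfolding at by blast
  next
    assume "\<forall>s\<in>{a..b}. \<bar>s - t\<bar> < \<delta> \<longrightarrow> g t \<le> g s"
    then have "\<forall>s. \<bar>t - s\<bar> < \<epsilon> \<longrightarrow> g t \<le> g s"
      by (auto simp: \<epsilon>_def abs_less_iff)
    then show ?thesis
      using DERIV_local_min der \<open>0 < \<epsilon>\<close> unfolding at by blast
  qed
qed

lemma deriv_interior_Icc:
  fixes g :: "real \<Rightarrow> real"
  assumes "\<And>x. x \<in> {a..b} \<Longrightarrow> (g has_real_derivative g' x) (at x within {a..b})"
    and "\<And>x. x \<in> {a..b} \<Longrightarrow> (g' has_real_derivative g'' x) (at x within {a..b})"
    and "a < t" "t < b"
  shows "deriv g t = g' t" and "deriv (deriv g) t = g'' t"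
proof -
  have at: "\<And>x. x \<in> {a<..<b} \<Longrightarrow> at x within {a..b} = at x"
    by (simp add: at_within_Icc_at)
  have g': "deriv g x = g' x" if "x \<in> {a<..<b}" for x
    using assms(1)[of x] at[OF that] that by (auto intro: DERIV_imp_deriv)
  then show "deriv g t = g' t" using assms by simp
  have "(g' has_real_derivative g'' t) (at t)"
    using assms(2)[of t] at[of t] assms(3,4) by auto
  then have "(deriv g has_real_derivative g'' t) (at t)"
    by (rule has_field_derivative_transform_within_open[where S = "{a<..<b}"])
       (use assms g' in auto)
  then show "deriv (deriv g) t = g'' t"
    by (rule DERIV_imp_deriv)
qed

lemma DERIV_shift_Icc:
  fixes h :: "real \<Rightarrow> real"
  assumes "(h has_real_derivative l) (at (a + s) within {a..b})"
  shows "((\<lambda>s. h (a + s)) has_real_derivative l) (at s within {0..b - a})"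
proof -
  have "((+) a has_real_derivative 1) (at s within {0..b - a})"
    by (intro derivative_eq_intros) auto
  moreover have "(+) a ` {0..b - a} = {a..b}"
    by simp
  ultimately have "(h \<circ> (+) a has_real_derivative l * 1) (at s within {0..b - a})"
    using assms by (intro DERIV_image_chain) auto
  then show ?thesis by (simp add: o_def)
qed

lemma DERIV_zero_at_limit_of_zeros:
  fixes h :: "real \<Rightarrow> real"
  assumes der: "(h has_real_derivative l) (at x within S)"
    and limpt: "x islimpt {t\<in>S. h t = 0}"
  shows "h x = 0" and "l = 0"
proof -
  define Z where "Z = {t\<in>S. h t = 0}"
  have nontriv: "at x within Z \<noteq> bot"
    using limpt trivial_limit_within unfolding Z_def by blast
  have derZ: "(h has_real_derivative l) (at x within Z)"
    using der by (rule DERIV_subset) (auto simp: Z_def)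
  have "(h \<longlongrightarrow> h x) (at x within Z)"
    using DERIV_continuous[OF derZ] by (simp add: continuous_within)
  moreover have "(h \<longlongrightarrow> 0) (at x within Z)"
    by (rule tendsto_eventually) (auto simp: eventually_at_filter Z_def)
  ultimately show hx: "h x = 0"
    using tendsto_unique[OF nontriv] by blast
  have "((\<lambda>y. (h y - h x) / (y - x)) \<longlongrightarrow> l) (at x within Z)"
    using derZ has_field_derivative_iff by blast
  moreover have "((\<lambda>y. (h y - h x) / (y - x)) \<longlongrightarrow> 0) (at x within Z)"
    by (rule tendsto_eventually) (auto simp: eventually_at_filter Z_def hx)
  ultimately show "l = 0"
    using tendsto_unique[OF nontriv] by blast
qed

lemma harmonic_energy_constant:
  fixes g d :: "real \<Rightarrow> real"
  assumes "\<And>t. t \<in> {a..b} \<Longrightarrow> (g has_real_derivative d t) (at t within {a..b})"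
    and "\<And>t. t \<in> {a..b} \<Longrightarrow> (d has_real_derivative -(k\<^sup>2 * g t)) (at t within {a..b})"
  shows "\<exists>c. \<forall>t\<in>{a..b}. (d t)\<^sup>2 + k\<^sup>2 * (g t)\<^sup>2 = c"
proof (rule has_field_derivative_zero_constant)
  fix t assume t: "t \<in> {a..b}"
  have "((\<lambda>t. (d t)\<^sup>2 + k\<^sup>2 * (g t)\<^sup>2) has_real_derivative
          2 * d t * -(k\<^sup>2 * g t) + k\<^sup>2 * (2 * g t * d t)) (at t within {a..b})"
    using assms t by (intro derivative_eq_intros) auto
  then show "((\<lambda>t. (d t)\<^sup>2 + k\<^sup>2 * (g t)\<^sup>2) has_real_derivative 0) (at t within {a..b})"
    by (simp add: algebra_simps)
qed simp

(* An accumulation point of zeros of d is a common zero of d and d' = -k^2 g, where the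
   conserved energy vanishes. *)
lemma harmonic_zeros_finite_or_trivial:
  fixes g d :: "real \<Rightarrow> real"
  assumes g: "\<And>t. t \<in> {a..b} \<Longrightarrow> (g has_real_derivative d t) (at t within {a..b})"
    and d: "\<And>t. t \<in> {a..b} \<Longrightarrow> (d has_real_derivative -(k\<^sup>2 * g t)) (at t within {a..b})"
  shows "finite {t\<in>{a..b}. d t = 0} \<or> (\<forall>t\<in>{a..b}. d t = 0 \<and> k\<^sup>2 * g t = 0)"
proof (cases "finite {t\<in>{a..b}. d t = 0}")
  case False
  then obtain t0 where t0: "t0 \<in> {a..b}" "t0 islimpt {t\<in>{a..b}. d t = 0}"
    using compact_eq_Bolzano_Weierstrass[of "{a..b}"] by auto
  have "d t0 = 0" "k\<^sup>2 * g t0 = 0"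
    using DERIV_zero_at_limit_of_zeros[OF d[OF t0(1)] t0(2)] by auto
  obtain c where c: "\<forall>t\<in>{a..b}. (d t)\<^sup>2 + k\<^sup>2 * (g t)\<^sup>2 = c"
    using harmonic_energy_constant[OF g d] by blast
  have "c = (d t0)\<^sup>2 + (k\<^sup>2 * g t0) * g t0"
    using c t0(1) by (simp add: power2_eq_square mult.assoc)
  then have "c = 0"
    using \<open>d t0 = 0\<close> \<open>k\<^sup>2 * g t0 = 0\<close> by simp
  have "\<forall>t\<in>{a..b}. d t = 0 \<and> k\<^sup>2 * g t = 0"
  proof
    fix t assume "t \<in> {a..b}"
    then have "(d t)\<^sup>2 + k\<^sup>2 * (g t)\<^sup>2 = 0" using c \<open>c = 0\<close> by simp
    moreover have "0 \<le> (d t)\<^sup>2" "0 \<le> k\<^sup>2 * (g t)\<^sup>2" by simp_all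
    ultimately show "d t = 0 \<and> k\<^sup>2 * g t = 0"
      by (simp add: add_nonneg_eq_0_iff power2_eq_square)
  qed
  then show ?thesis ..
qed simp

lemma sum_nonpos_diff_sum_nonneg_eq_0D:
  fixes a b :: "'x \<Rightarrow> real"
  assumes "finite A" "finite B" "\<And>x. x \<in> A \<Longrightarrow> a x \<le> 0" "\<And>x. x \<in> B \<Longrightarrow> 0 \<le> b x"
    and "sum a A - sum b B = 0"
  shows "\<forall>x\<in>A. a x = 0" and "\<forall>x\<in>B. b x = 0"
proof -
  have "sum a A \<le> 0" "0 \<le> sum b B"
    using assms(3,4) by (simp_all add: sum_nonpos sum_nonneg)
  then have "sum (\<lambda>x. - a x) A = 0" "sum b B = 0"
    using assms(5) by (simp_all add: sum_negf)
  then show "\<forall>x\<in>A. a x = 0" "\<forall>x\<in>B. b x = 0"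
    using assms(1-4) by (simp_all add: sum_nonneg_eq_0_iff)
qed

lemma deriv_zero_at_vertex_max:
  fixes f D :: "'e \<Rightarrow> real \<Rightarrow> real"
  assumes "finite E" and length_pos: "\<And>e. e \<in> E \<Longrightarrow> 0 < L e"
    and der: "\<And>e t. e \<in> E \<Longrightarrow> t \<in> {0..L e} \<Longrightarrow> (f e has_real_derivative D e t) (at t within {0..L e})"
    and kirchhoff: "(\<Sum>e\<in>{e\<in>E. src e = v}. D e 0) - (\<Sum>e\<in>{e\<in>E. tgt e = v}. D e (L e)) = 0"
    and "0 < \<delta>"
    and max: "\<forall>e\<in>E. (src e = v \<longrightarrow> (\<forall>s\<in>{0..L e}. s < \<delta> \<longrightarrow> f e s \<le> f e 0)) \<and>
                    (tgt e = v \<longrightarrow> (\<forall>s\<in>{0..L e}. L e - s < \<delta> \<longrightarrow> f e s \<le> f e (L e)))"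
    and "e \<in> E"
  shows "(src e = v \<longrightarrow> D e 0 = 0) \<and> (tgt e = v \<longrightarrow> D e (L e) = 0)"
proof -
  have "D e 0 \<le> 0" if "e \<in> {e\<in>E. src e = v}" for e
  proof (rule DERIV_local_max_left_end)
    show "(f e has_real_derivative D e 0) (at 0 within {0..L e})" "0 < L e"
      using that der[of e 0] length_pos[of e] by auto
    show "f e s \<le> f e 0" if "s \<in> {0..L e}" "s - 0 < \<delta>" for s
      using max \<open>e \<in> {e\<in>E. src e = v}\<close> that by auto
  qed (fact \<open>0 < \<delta>\<close>)
  moreover have "0 \<le> D e (L e)" if "e \<in> {e\<in>E. tgt e = v}" for e
  proof (rule DERIV_local_max_right_end)
    show "(f e has_real_derivative D e (L e)) (at (L e) within {0..L e})" "0 < L e"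
      using that der[of e "L e"] length_pos[of e] by auto
    show "f e s \<le> f e (L e)" if "s \<in> {0..L e}" "L e - s < \<delta>" for s
      using max \<open>e \<in> {e\<in>E. tgt e = v}\<close> that by auto
  qed (fact \<open>0 < \<delta>\<close>)
  ultimately show ?thesis
    using sum_nonpos_diff_sum_nonneg_eq_0D[OF _ _ _ _ kirchhoff] \<open>finite E\<close> \<open>e \<in> E\<close> by auto
qed

lemma component_incident_edges:
  assumes OV: "OV = {w. (x, w) \<in> (graph_adj PE s t)\<^sup>*}" and OE: "OE = {p\<in>PE. s p \<in> OV}"
    and "v \<in> OV"
  shows "{p\<in>OE. s p = v} = {p\<in>PE. s p = v}" and "{p\<in>OE. t p = v} = {p\<in>PE. t p = v}"
proof -
  have "s p \<in> OV" if "p \<in> PE" "t p = v" for p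
  proof -
    have "(v, s p) \<in> graph_adj PE s t"
      using that unfolding graph_adj_def by blast
    then show ?thesis
      using \<open>v \<in> OV\<close> OV by (auto intro: rtrancl_into_rtrancl)
  qed
  then show "{p\<in>OE. s p = v} = {p\<in>PE. s p = v}" "{p\<in>OE. t p = v} = {p\<in>PE. t p = v}"
    using \<open>v \<in> OV\<close> OE by auto
qed

lemma mem_pieces_iff:
  "(e, a, b) \<in> pieces E L f \<longleftrightarrow> e \<in> E \<and> a \<in> cutpts L f e \<and> b \<in> cutpts L f e \<and> a < b \<and>
     (\<forall>t\<in>cutpts L f e. \<not> (a < t \<and> t < b))"
  by (auto simp: pieces_def)

lemma pieces_same_start:
  assumes "(e, a, b) \<in> pieces E L f" and "(e, a, b') \<in> pieces E L f"
  shows "b = b'"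
proof (rule ccontr)
  assume "b \<noteq> b'"
  then consider "b < b'" | "b' < b" by linarith
  then show False
    using assms by cases (auto simp: mem_pieces_iff)
qed

lemma pieces_same_end:
  assumes "(e, a, b) \<in> pieces E L f" and "(e, a', b) \<in> pieces E L f"
  shows "a = a'"
proof (rule ccontr)
  assume "a \<noteq> a'"
  then consider "a < a'" | "a' < a" by linarith
  then show False
    using assms by cases (auto simp: mem_pieces_iff)
qed

lemma nrestr_Pair [simp]: "nrestr f (e, a, b) = (\<lambda>s. f e (a + s))"
  by (simp add: nrestr_def fun_eq_iff)

lemma nlen_Pair [simp]: "nlen (e, a, b) = b - a"
  by (simp add: nlen_def)

lemma cut_graph_continuity:
  assumes "\<forall>e\<in>E. f e 0 = G (src e) \<and> f e (L e) = G (tgt e)"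
  shows "\<exists>g. \<forall>p\<in>pieces E L f. nrestr f p 0 = g (nsrc E src tgt L f p) \<and>
                                nrestr f p (nlen p) = g (ntgt E src tgt L f p)"
proof (intro exI ballI)
  fix p assume "p \<in> pieces E L f"
  then obtain e a b where p: "p = (e, a, b)" "e \<in> E"
    by (auto simp: pieces_def)
  let ?g = "\<lambda>v. case v of Old w \<Rightarrow> G w | Cut e t _ \<Rightarrow> f e t"
  show "nrestr f p 0 = ?g (nsrc E src tgt L f p) \<and> nrestr f p (nlen p) = ?g (ntgt E src tgt L f p)"
    using assms p by (auto simp: nsrc_def ntgt_def)
qed

lemma nsrc_eq_Old_iff:
  assumes "\<not> neumann_vertex E src tgt L f w"
  shows "nsrc E src tgt L f p = Old w \<longleftrightarrow> fst (snd p) = 0 \<and> src (fst p) = w"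
  using assms by (cases p) (auto simp: nsrc_def)

lemma ntgt_eq_Old_iff:
  assumes "\<not> neumann_vertex E src tgt L f w"
  shows "ntgt E src tgt L f p = Old w \<longleftrightarrow> snd (snd p) = L (fst p) \<and> tgt (fst p) = w"
  using assms by (cases p) (auto simp: ntgt_def)

locale morse_eigenfunction =
  fixes V :: "'v set" and E :: "'e set" and src tgt :: "'e \<Rightarrow> 'v" and L :: "'e \<Rightarrow> real"
    and k :: real and f D :: "'e \<Rightarrow> real \<Rightarrow> real"
  assumes finite_edges: "finite E"
    and edge_ends: "e \<in> E \<Longrightarrow> src e \<in> V \<and> tgt e \<in> V"
    and length_pos: "e \<in> E \<Longrightarrow> 0 < L e"
    and f_deriv: "e \<in> E \<Longrightarrow> t \<in> {0..L e} \<Longrightarrow> (f e has_real_derivative D e t) (at t within {0..L e})"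
    and D_deriv: "e \<in> E \<Longrightarrow> t \<in> {0..L e} \<Longrightarrow>
                    (D e has_real_derivative -(k\<^sup>2 * f e t)) (at t within {0..L e})"
    and kirchhoff: "v \<in> V \<Longrightarrow> (\<Sum>e\<in>{e\<in>E. src e = v}. D e 0) - (\<Sum>e\<in>{e\<in>E. tgt e = v}. D e (L e)) = 0"
    and morse: "morse E L f"
begin

lemma deriv_interior:
  assumes "e \<in> E" "0 < t" "t < L e"
  shows "deriv (f e) t = D e t" and "deriv (deriv (f e)) t = -(k\<^sup>2 * f e t)"
  using deriv_interior_Icc[of 0 "L e" "f e" "D e" "\<lambda>t. -(k\<^sup>2 * f e t)" t] f_deriv D_deriv assms
  by auto

lemma D_zero_at_edge_extremum:
  assumes "e \<in> E" "edge_extremum L f e t"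
  shows "D e t = 0"
  using assms f_deriv[of e t] DERIV_local_extremum_interior[of "f e" "D e t" t 0 "L e"]
  unfolding edge_extremum_def by force

lemma finite_critical_points:
  assumes "e \<in> E"
  shows "finite {t\<in>{0..L e}. D e t = 0}"
proof -
  define m where "m = L e / 2"
  have m: "0 < m" "m < L e"
    using length_pos[OF assms] by (simp_all add: m_def)
  then have "\<not> (D e m = 0 \<and> k\<^sup>2 * f e m = 0)"
    using morse assms deriv_interior[OF assms m] unfolding morse_def by auto
  then show ?thesis
    using harmonic_zeros_finite_or_trivial[of 0 "L e" "f e" "D e" k] f_deriv D_deriv assms m
    by fastforce
qed

lemma cutpts_subset:
  assumes "e \<in> E"
  shows "cutpts L f e \<subseteq> {0..L e}"
  using length_pos[OF assms] by (auto simp: cutpts_def edge_extremum_def)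

lemma finite_cutpts:
  assumes "e \<in> E"
  shows "finite (cutpts L f e)"
proof (rule finite_subset)
  show "cutpts L f e \<subseteq> {0, L e} \<union> {t\<in>{0..L e}. D e t = 0}"
    using cutpts_subset[OF assms] D_zero_at_edge_extremum[OF assms] by (auto simp: cutpts_def)
qed (use finite_critical_points[OF assms] in simp)

lemma pieces_bounds:
  assumes "(e, a, b) \<in> pieces E L f"
  shows "e \<in> E" and "0 \<le> a" and "a < b" and "b \<le> L e"
proof -
  show "e \<in> E" "a < b"
    using assms by (simp_all add: mem_pieces_iff)
  then show "0 \<le> a" "b \<le> L e"
    using assms cutpts_subset[of e] by (auto simp: mem_pieces_iff)
qed

lemma D_zero_at_vertex_extremum:
  assumes "vertex_extremum E src tgt L f v" and "v \<in> V" and "e \<in> E"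
  shows "(src e = v \<longrightarrow> D e 0 = 0) \<and> (tgt e = v \<longrightarrow> D e (L e) = 0)"
proof -
  obtain \<delta> where "0 < \<delta>" and ext:
    "(\<forall>e\<in>E. (src e = v \<longrightarrow> (\<forall>s\<in>{0..L e}. s < \<delta> \<longrightarrow> f e s \<le> f e 0)) \<and>
            (tgt e = v \<longrightarrow> (\<forall>s\<in>{0..L e}. L e - s < \<delta> \<longrightarrow> f e s \<le> f e (L e)))) \<or>
     (\<forall>e\<in>E. (src e = v \<longrightarrow> (\<forall>s\<in>{0..L e}. s < \<delta> \<longrightarrow> - f e s \<le> - f e 0)) \<and>
            (tgt e = v \<longrightarrow> (\<forall>s\<in>{0..L e}. L e - s < \<delta> \<longrightarrow> - f e s \<le> - f e (L e))))"
    using assms(1) unfolding vertex_extremum_def by auto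
  from ext show ?thesis
  proof
    assume "\<forall>e\<in>E. (src e = v \<longrightarrow> (\<forall>s\<in>{0..L e}. s < \<delta> \<longrightarrow> f e s \<le> f e 0)) \<and>
            (tgt e = v \<longrightarrow> (\<forall>s\<in>{0..L e}. L e - s < \<delta> \<longrightarrow> f e s \<le> f e (L e)))"
    then show ?thesis
      using deriv_zero_at_vertex_max[OF finite_edges length_pos f_deriv kirchhoff[OF assms(2)] \<open>0 < \<delta>\<close>]
        assms(3) by blast
  next
    assume max: "\<forall>e\<in>E. (src e = v \<longrightarrow> (\<forall>s\<in>{0..L e}. s < \<delta> \<longrightarrow> - f e s \<le> - f e 0)) \<and>
            (tgt e = v \<longrightarrow> (\<forall>s\<in>{0..L e}. L e - s < \<delta> \<longrightarrow> - f e s \<le> - f e (L e)))"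
    have "(\<Sum>e\<in>{e\<in>E. src e = v}. - D e 0) - (\<Sum>e\<in>{e\<in>E. tgt e = v}. - D e (L e)) = 0"
      using kirchhoff[OF assms(2)] by (simp add: sum_negf)
    from deriv_zero_at_vertex_max[where f = "\<lambda>e s. - f e s" and D = "\<lambda>e s. - D e s",
        OF finite_edges length_pos DERIV_minus[OF f_deriv] this \<open>0 < \<delta>\<close> max assms(3)]
    show ?thesis by simp
  qed
qed

lemma initial_piece_exists:
  assumes "e \<in> E"
  shows "\<exists>b. (e, 0, b) \<in> pieces E L f"
proof -
  let ?A = "{t\<in>cutpts L f e. 0 < t}"
  have "finite ?A" "L e \<in> ?A"
    using finite_cutpts[OF assms] length_pos[OF assms] by (auto simp: cutpts_def)
  then have "Min ?A \<in> ?A" "\<forall>t\<in>?A. Min ?A \<le> t"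
    using Min_in by auto
  then have "(e, 0, Min ?A) \<in> pieces E L f"
    using assms by (auto simp: mem_pieces_iff cutpts_def)
  then show ?thesis ..
qed

lemma final_piece_exists:
  assumes "e \<in> E"
  shows "\<exists>a. (e, a, L e) \<in> pieces E L f"
proof -
  let ?A = "{t\<in>cutpts L f e. t < L e}"
  have "finite ?A" "0 \<in> ?A"
    using finite_cutpts[OF assms] length_pos[OF assms] by (auto simp: cutpts_def)
  then have "Max ?A \<in> ?A" "\<forall>t\<in>?A. t \<le> Max ?A"
    using Max_in by auto
  then have "(e, Max ?A, L e) \<in> pieces E L f"
    using assms by (auto simp: mem_pieces_iff cutpts_def)
  then show ?thesis ..
qed

lemma bij_betw_initial_pieces:
  "bij_betw fst {p\<in>pieces E L f. fst (snd p) = 0 \<and> P (fst p)} {e\<in>E. P e}"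
proof (rule bij_betwI')
  fix p q assume "p \<in> {p\<in>pieces E L f. fst (snd p) = 0 \<and> P (fst p)}"
    and "q \<in> {p\<in>pieces E L f. fst (snd p) = 0 \<and> P (fst p)}"
  then have "p = (fst p, 0, snd (snd p))" "q = (fst q, 0, snd (snd q))" "p \<in> pieces E L f" "q \<in> pieces E L f"
    by (auto simp: prod_eq_iff)
  then show "(fst p = fst q) = (p = q)"
    using pieces_same_start by metis
next
  fix p assume "p \<in> {p\<in>pieces E L f. fst (snd p) = 0 \<and> P (fst p)}"
  then show "fst p \<in> {e\<in>E. P e}"
    by (cases p) (auto simp: mem_pieces_iff)
next
  fix e assume e: "e \<in> {e\<in>E. P e}"
  then obtain b where "(e, 0, b) \<in> pieces E L f"
    using initial_piece_exists by blast
  with e show "\<exists>p\<in>{p\<in>pieces E L f. fst (snd p) = 0 \<and> P (fst p)}. e = fst p"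
    by force
qed

lemma bij_betw_final_pieces:
  "bij_betw fst {p\<in>pieces E L f. snd (snd p) = L (fst p) \<and> P (fst p)} {e\<in>E. P e}"
proof (rule bij_betwI')
  fix p q assume "p \<in> {p\<in>pieces E L f. snd (snd p) = L (fst p) \<and> P (fst p)}"
    and "q \<in> {p\<in>pieces E L f. snd (snd p) = L (fst p) \<and> P (fst p)}"
  then have "p = (fst p, fst (snd p), L (fst p))" "q = (fst q, fst (snd q), L (fst q))" "p \<in> pieces E L f" "q \<in> pieces E L f"
    by (auto simp: prod_eq_iff)
  then show "(fst p = fst q) = (p = q)"
    using pieces_same_end by metis
next
  fix p assume "p \<in> {p\<in>pieces E L f. snd (snd p) = L (fst p) \<and> P (fst p)}"
  then show "fst p \<in> {e\<in>E. P e}"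
    by (cases p) (auto simp: mem_pieces_iff)
next
  fix e assume e: "e \<in> {e\<in>E. P e}"
  then obtain a where "(e, a, L e) \<in> pieces E L f"
    using final_piece_exists by blast
  with e show "\<exists>p\<in>{p\<in>pieces E L f. snd (snd p) = L (fst p) \<and> P (fst p)}. e = fst p"
    by force
qed

lemma nrestr_D_zero_at_cut_src:
  assumes "p \<in> pieces E L f" and "nsrc E src tgt L f p = Cut x y z"
  shows "nrestr D p 0 = 0"
proof -
  obtain e a b where p: "p = (e, a, b)"
    by (cases p)
  note bounds = pieces_bounds[OF assms(1)[unfolded p]]
  have "D e a = 0"
  proof (cases "a = 0")
    case True
    then have "vertex_extremum E src tgt L f (src e)"
      using assms(2) by (auto simp: p nsrc_def neumann_vertex_def split: if_splits)
    then show ?thesis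
      using D_zero_at_vertex_extremum edge_ends bounds True by auto
  next
    case False
    then have "edge_extremum L f e a"
      using assms(1) bounds by (auto simp: p mem_pieces_iff cutpts_def)
    then show ?thesis
      using D_zero_at_edge_extremum bounds by simp
  qed
  then show ?thesis
    by (simp add: p)
qed

lemma nrestr_D_zero_at_cut_tgt:
  assumes "p \<in> pieces E L f" and "ntgt E src tgt L f p = Cut x y z"
  shows "nrestr D p (nlen p) = 0"
proof -
  obtain e a b where p: "p = (e, a, b)"
    by (cases p)
  note bounds = pieces_bounds[OF assms(1)[unfolded p]]
  have "D e b = 0"
  proof (cases "b = L e")
    case True
    then have "vertex_extremum E src tgt L f (tgt e)"
      using assms(2) by (auto simp: p ntgt_def neumann_vertex_def split: if_splits)
    then show ?thesis
      using D_zero_at_vertex_extremum edge_ends bounds True by auto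
  next
    case False
    then have "edge_extremum L f e b"
      using assms(1) bounds by (auto simp: p mem_pieces_iff cutpts_def)
    then show ?thesis
      using D_zero_at_edge_extremum bounds by simp
  qed
  then show ?thesis
    by (simp add: p)
qed

lemma cut_graph_ode:
  assumes "p \<in> pieces E L f" and "t \<in> {0..nlen p}"
  shows "(nrestr f p has_real_derivative nrestr D p t) (at t within {0..nlen p})"
    and "(nrestr D p has_real_derivative -(k\<^sup>2 * nrestr f p t)) (at t within {0..nlen p})"
proof -
  obtain e a b where p: "p = (e, a, b)"
    by (cases p)
  note bounds = pieces_bounds[OF assms(1)[unfolded p]]
  have sub: "{a..b} \<subseteq> {0..L e}" and at: "a + t \<in> {0..L e}"
    using bounds assms(2) by (auto simp: p)
  show "(nrestr f p has_real_derivative nrestr D p t) (at t within {0..nlen p})"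
    using DERIV_shift_Icc[OF DERIV_subset[OF f_deriv[OF bounds(1) at] sub]] by (simp add: p)
  show "(nrestr D p has_real_derivative -(k\<^sup>2 * nrestr f p t)) (at t within {0..nlen p})"
    using DERIV_shift_Icc[OF DERIV_subset[OF D_deriv[OF bounds(1) at] sub]] by (simp add: p)
qed

lemma cut_graph_kirchhoff:
  "(\<Sum>p\<in>{p\<in>pieces E L f. nsrc E src tgt L f p = v}. nrestr D p 0)
     - (\<Sum>p\<in>{p\<in>pieces E L f. ntgt E src tgt L f p = v}. nrestr D p (nlen p)) = 0"
proof (cases v)
  case (Cut x y z)
  then show ?thesis
    using nrestr_D_zero_at_cut_src nrestr_D_zero_at_cut_tgt by (simp add: sum.neutral)
next
  case (Old w)
  show ?thesis
  proof (cases "neumann_vertex E src tgt L f w")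
    case True
    have "nsrc E src tgt L f p \<noteq> v" "ntgt E src tgt L f p \<noteq> v" for p
      using True Old by (auto simp: nsrc_def ntgt_def split: prod.split)
    then show ?thesis
      by simp
  next
    case False
    have "(\<Sum>p\<in>{p\<in>pieces E L f. nsrc E src tgt L f p = v}. nrestr D p 0)
        = (\<Sum>p\<in>{p\<in>pieces E L f. fst (snd p) = 0 \<and> src (fst p) = w}. D (fst p) 0)"
      using False by (intro sum.cong) (auto simp: Old nsrc_eq_Old_iff nrestr_def split: prod.splits)
    also have "\<dots> = (\<Sum>e\<in>{e\<in>E. src e = w}. D e 0)"
      by (rule sum.reindex_bij_betw[OF bij_betw_initial_pieces])
    finally have src_sum: "(\<Sum>p\<in>{p\<in>pieces E L f. nsrc E src tgt L f p = v}. nrestr D p 0)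
        = (\<Sum>e\<in>{e\<in>E. src e = w}. D e 0)" .
    have "(\<Sum>p\<in>{p\<in>pieces E L f. ntgt E src tgt L f p = v}. nrestr D p (nlen p))
        = (\<Sum>p\<in>{p\<in>pieces E L f. snd (snd p) = L (fst p) \<and> tgt (fst p) = w}. D (fst p) (L (fst p)))"
      using False by (intro sum.cong) (auto simp: Old ntgt_eq_Old_iff nrestr_def nlen_def split: prod.splits)
    also have "\<dots> = (\<Sum>e\<in>{e\<in>E. tgt e = w}. D e (L e))"
      by (rule sum.reindex_bij_betw[OF bij_betw_final_pieces])
    finally have tgt_sum: "(\<Sum>p\<in>{p\<in>pieces E L f. ntgt E src tgt L f p = v}. nrestr D p (nlen p))
        = (\<Sum>e\<in>{e\<in>E. tgt e = w}. D e (L e))" .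
    show ?thesis
    proof (cases "w \<in> V")
      case False
      then have no_edges: "{e\<in>E. src e = w} = {}" "{e\<in>E. tgt e = w} = {}"
        using edge_ends by auto
      show ?thesis
        unfolding src_sum tgt_sum no_edges by simp
    qed (simp add: src_sum tgt_sum kirchhoff)
  qed
qed

lemma nrestr_nonvanishing_on_piece:
  assumes "p \<in> pieces E L f"
  shows "\<exists>t\<in>{0..nlen p}. nrestr f p t \<noteq> 0"
proof (rule ccontr)
  obtain e a b where p: "p = (e, a, b)"
    by (cases p)
  note bounds = pieces_bounds[OF assms[unfolded p]]
  assume "\<not> (\<exists>t\<in>{0..nlen p}. nrestr f p t \<noteq> 0)"
  then have zero: "f e s = 0" if "s \<in> {a..b}" for s
    using that by (auto simp: p dest: bspec[of _ _ "s - a"])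
  define m where "m = (a + b) / 2"
  have m: "a < m" "m < b" "0 < m" "m < L e"
    using bounds by (auto simp: m_def)
  have "f e s \<le> f e m" if "\<bar>s - m\<bar> < (b - a) / 2" for s
  proof -
    have "s - m < (b - a) / 2" "m - s < (b - a) / 2"
      using that by arith+
    then have "a < s" "s < b"
      by (simp_all add: m_def field_simps)
    then show ?thesis
      using zero m by simp
  qed
  moreover have "0 < (b - a) / 2"
    using bounds by simp
  ultimately have "edge_extremum L f e m"
    unfolding edge_extremum_def using m by blast
  then have "deriv (f e) m = 0" "deriv (deriv (f e)) m = 0"
    using D_zero_at_edge_extremum deriv_interior bounds m zero by auto
  then show False
    using morse bounds m unfolding morse_def by auto
qed

lemma eigenfunction_on_neumann_domain:
  assumes "neumann_domain V E src tgt L f OV OE" and "0 \<le> k"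
    and continuous: "\<forall>e\<in>E. f e 0 = G (src e) \<and> f e (L e) = G (tgt e)"
  shows "eigenfunction OV OE (nsrc E src tgt L f) (ntgt E src tgt L f) nlen k (nrestr f)"
proof -
  let ?s = "nsrc E src tgt L f" and ?t = "ntgt E src tgt L f"
  obtain p0 where p0: "p0 \<in> pieces E L f"
    and OV: "OV = {w. (?s p0, w) \<in> (graph_adj (pieces E L f) ?s ?t)\<^sup>*}"
    and OE: "OE = {p\<in>pieces E L f. ?s p \<in> OV}"
    using assms(1) unfolding neumann_domain_def Let_def by blast
  have "OE \<subseteq> pieces E L f" and "p0 \<in> OE"
    using OE OV p0 by auto
  show ?thesis
    unfolding eigenfunction_def
  proof (intro conjI exI[of _ "nrestr D"] ballI)
    fix p t assume "p \<in> OE" "t \<in> {0..nlen p}"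
    then show "(nrestr f p has_real_derivative nrestr D p t) (at t within {0..nlen p})"
      and "(nrestr D p has_real_derivative -(k\<^sup>2 * nrestr f p t)) (at t within {0..nlen p})"
      using cut_graph_ode \<open>OE \<subseteq> pieces E L f\<close> by blast+
  next
    fix v assume "v \<in> OV"
    then show "(\<Sum>p\<in>{p\<in>OE. ?s p = v}. nrestr D p 0) - (\<Sum>p\<in>{p\<in>OE. ?t p = v}. nrestr D p (nlen p)) = 0"
      using cut_graph_kirchhoff component_incident_edges[OF OV OE] by simp
  next
    show "\<exists>g. \<forall>p\<in>OE. nrestr f p 0 = g (?s p) \<and> nrestr f p (nlen p) = g (?t p)"
      using cut_graph_continuity[where G = G, OF continuous] \<open>OE \<subseteq> pieces E L f\<close> by blast
    show "\<exists>p\<in>OE. \<exists>t\<in>{0..nlen p}. nrestr f p t \<noteq> 0"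
      using nrestr_nonvanishing_on_piece \<open>OE \<subseteq> pieces E L f\<close> \<open>p0 \<in> OE\<close> by blast
  qed (fact \<open>0 \<le> k\<close>)
qed

end

lemma eigenfunction_imp_morse_eigenfunction:
  assumes "standard_graph V E src tgt L" and "eigenfunction V E src tgt L k f" and "morse E L f"
  obtains D G where "morse_eigenfunction V E src tgt L k f D" and "0 \<le> k"
    and "\<forall>e\<in>E. f e 0 = G (src e) \<and> f e (L e) = G (tgt e)"
proof -
  obtain D G where "0 \<le> k"
    and der: "\<forall>e\<in>E. \<forall>t\<in>{0..L e}. (f e has_real_derivative D e t) (at t within {0..L e}) \<and>
                (D e has_real_derivative - (k\<^sup>2 * f e t)) (at t within {0..L e})"
    and kirchhoff: "\<forall>v\<in>V. (\<Sum>e\<in>{e\<in>E. src e = v}. D e 0) - (\<Sum>e\<in>{e\<in>E. tgt e = v}. D e (L e)) = 0"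
    and "\<forall>e\<in>E. f e 0 = G (src e) \<and> f e (L e) = G (tgt e)"
    using assms(2) unfolding eigenfunction_def by blast
  moreover have "morse_eigenfunction V E src tgt L k f D"
    using assms(1,3) der kirchhoff unfolding standard_graph_def metric_graph_def
    by unfold_locales auto
  ultimately show ?thesis
    using that by blast
qed

theorem lemma8p1:
  fixes V :: "'v set" and E :: "'e set" and src tgt :: "'e \<Rightarrow> 'v" and L :: "'e \<Rightarrow> real"
    and k :: real and f :: "'e \<Rightarrow> real \<Rightarrow> real"
    and OV :: "('v, 'e) nvert set" and OE :: "('e \<times> real \<times> real) set"
  assumes "standard_graph V E src tgt L"
    and "nontrivial_graph V E src tgt"
    and "eigenfunction V E src tgt L k f"
    and "morse E L f"
    and "neumann_domain V E src tgt L f OV OE"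
  shows "eigenfunction OV OE (nsrc E src tgt L f) (ntgt E src tgt L f) nlen k (nrestr f)"
proof -
  obtain D G where "morse_eigenfunction V E src tgt L k f D" and "0 \<le> k"
    and "\<forall>e\<in>E. f e 0 = G (src e) \<and> f e (L e) = G (tgt e)"
    using eigenfunction_imp_morse_eigenfunction assms(1,3,4) by blast
  then show ?thesis
    using morse_eigenfunction.eigenfunction_on_neumann_domain assms(5) by blast
qed

end
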